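(* Let $k$ be a field and let $V_\bullet$ be a complex of finite dimensional $k$-vector spaces, indexed cohomologically (differential $d_i:V_i\to V_{i+1}$, $i\in\mathbb{Z}$). Call a finite interval $S=[M,N]\subset\mathbb{Z}$ a stretch if it is maximal (among finite intervals) with respect to the property that $d_i\neq 0$ whenever $i,i+1\in S$. Let $\{T_i\}_{i\in\mathbb{Z}}$ be scalars in $k$ such that $\sum_{i\in S}(-1)^iT_i=0$ for every stretch $S$ of $V_\bullet$. Then there exists a null-homotopic chain map $\tau_\bullet:V_\bullet\to V_\bullet$ such that $\operatorname{tr}(\tau_i)=T_i$ for every $i\in\mathbb{Z}$.
   Context: $\operatorname{tr}$ denotes the trace of an endomorphism of a finite dimensional vector space. A chain map is null-homotopic if it is chain homotopic to the zero map. *)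

theory Defs
  imports "Jordan_Normal_Form.Matrix"
begin

text \<open>A complex of finite dimensional k-vector spaces, indexed cohomologically by int:
  V_i = k^(n i) (after choosing bases), differential d_i : V_i -> V_(i+1) given by a
  (n (i+1)) x (n i) matrix.\<close>

definition is_complex :: "(int \<Rightarrow> nat) \<Rightarrow> (int \<Rightarrow> 'k::field mat) \<Rightarrow> bool" where
  "is_complex n d \<longleftrightarrow>
     (\<forall>i. d i \<in> carrier_mat (n (i+1)) (n i)) \<and>
     (\<forall>i. d (i+1) * d i = 0\<^sub>m (n (i+2)) (n i))"

definition mat_trace :: "'k::field mat \<Rightarrow> 'k" where
  "mat_trace A = (\<Sum>i<dim_row A. A $$ (i,i))"

definition finite_interval :: "int set \<Rightarrow> bool" where
  "finite_interval S \<longleftrightarrow> (\<exists>M N. S = {M..N})"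

definition stretch_prop :: "(int \<Rightarrow> 'k::field mat) \<Rightarrow> int set \<Rightarrow> bool" where
  "stretch_prop d S \<longleftrightarrow> (\<forall>i. i \<in> S \<and> i+1 \<in> S \<longrightarrow> d i \<noteq> 0\<^sub>m (dim_row (d i)) (dim_col (d i)))"

definition is_stretch :: "(int \<Rightarrow> 'k::field mat) \<Rightarrow> int set \<Rightarrow> bool" where
  "is_stretch d S \<longleftrightarrow> finite_interval S \<and> stretch_prop d S \<and>
     (\<forall>S'. finite_interval S' \<and> stretch_prop d S' \<and> S \<subseteq> S' \<longrightarrow> S' = S)"

definition chain_map :: "(int \<Rightarrow> nat) \<Rightarrow> (int \<Rightarrow> 'k::field mat) \<Rightarrow> (int \<Rightarrow> 'k mat) \<Rightarrow> bool" where
  "chain_map n d \<tau> \<longleftrightarrow>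
     (\<forall>i. \<tau> i \<in> carrier_mat (n i) (n i)) \<and> (\<forall>i. d i * \<tau> i = \<tau> (i+1) * d i)"

definition null_homotopic :: "(int \<Rightarrow> nat) \<Rightarrow> (int \<Rightarrow> 'k::field mat) \<Rightarrow> (int \<Rightarrow> 'k mat) \<Rightarrow> bool" where
  "null_homotopic n d \<tau> \<longleftrightarrow>
     (\<exists>h. (\<forall>i. h i \<in> carrier_mat (n (i-1)) (n i)) \<and>
          (\<forall>i. \<tau> i = d (i-1) * h i + h (i+1) * d i))"

end

theory Submission
  imports Defs
begin

text \<open>Any \<open>\<tau>\<^sub>i = d\<^sub>i\<^sub>-\<^sub>1 g\<^sub>i\<^sub>-\<^sub>1 + g\<^sub>i d\<^sub>i\<close> is a null-homotopic chain map, and by cyclicity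
  of the trace \<open>tr \<tau>\<^sub>i = a\<^sub>i\<^sub>-\<^sub>1 + a\<^sub>i\<close> with \<open>a\<^sub>i = tr (g\<^sub>i d\<^sub>i)\<close>. If \<open>d\<^sub>i \<noteq> 0\<close>, a single-entry
  matrix \<open>g\<^sub>i\<close> realises any prescribed \<open>a\<^sub>i\<close>; if \<open>d\<^sub>i = 0\<close>, necessarily \<open>a\<^sub>i = 0\<close>. So it suffices
  to solve \<open>a\<^sub>i\<^sub>-\<^sub>1 + a\<^sub>i = T\<^sub>i\<close> with \<open>a\<^sub>i = 0\<close> wherever \<open>d\<^sub>i = 0\<close>. The general solution is
  \<open>a\<^sub>i = (-1)\<^sup>i (P\<^sub>i - C)\<close> with \<open>P\<close> a partial sum of \<open>(-1)\<^sup>i T\<^sub>i\<close>; between two consecutive zeros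
  of \<open>d\<close> lies exactly a stretch, so the hypothesis makes \<open>P\<close> constant on the zeros of \<open>d\<close>,
  and \<open>C\<close> is that constant.\<close>

lemma mat_trace_mult:
  fixes A B :: "'k::field mat"
  assumes "A \<in> carrier_mat k m" "B \<in> carrier_mat m k"
  shows "mat_trace (A * B) = (\<Sum>i<k. \<Sum>j<m. A $$ (i,j) * B $$ (j,i))"
  using assms by (simp add: mat_trace_def scalar_prod_def atLeast0LessThan)

lemma mat_trace_mult_comm:
  fixes A B :: "'k::field mat"
  assumes "A \<in> carrier_mat k m" "B \<in> carrier_mat m k"
  shows "mat_trace (A * B) = mat_trace (B * A)"
  using assms by (simp add: mat_trace_mult sum.swap[of _ "{..<k}"] mult.commute)

lemma mat_trace_add:
  fixes A B :: "'k::field mat"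
  assumes "A \<in> carrier_mat m m" "B \<in> carrier_mat m m"
  shows "mat_trace (A + B) = mat_trace A + mat_trace B"
  using assms by (simp add: mat_trace_def sum.distrib)

lemma exists_mat_trace_mult_eq:
  fixes A :: "'k::field mat"
  assumes A: "A \<in> carrier_mat m k" and nz: "A \<noteq> 0\<^sub>m m k"
  shows "\<exists>B \<in> carrier_mat k m. mat_trace (B * A) = t"
proof -
  obtain r c where rc: "r < m" "c < k" "A $$ (r,c) \<noteq> 0"
    using A nz by (metis carrier_matD eq_matI index_zero_mat(1,2,3))
  define B where "B = mat k m (\<lambda>(q,p). if q = c \<and> p = r then t / A $$ (r,c) else 0)"
  have "mat_trace (B * A) = (\<Sum>q<k. \<Sum>p<m. B $$ (q,p) * A $$ (p,q))"
    using A by (intro mat_trace_mult) (auto simp: B_def)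
  also have "\<dots> = (\<Sum>q<k. if q = c then t else 0)"
    using rc by (intro sum.cong) (auto simp: B_def if_distrib[of "\<lambda>x. x * _"] sum.delta cong: if_cong)
  also have "\<dots> = t" using rc by simp
  finally show ?thesis by (auto simp: B_def)
qed

lemma null_homotopic_imp_chain_map:
  assumes cx: "is_complex n d" and nh: "null_homotopic n d \<tau>"
  shows "chain_map n d \<tau>"
proof -
  obtain h where hc: "\<And>i. h i \<in> carrier_mat (n (i-1)) (n i)"
    and \<tau>: "\<And>i. \<tau> i = d (i-1) * h i + h (i+1) * d i"
    using nh unfolding null_homotopic_def by blast
  have dc: "\<And>i. d i \<in> carrier_mat (n (i+1)) (n i)"
    and dd: "\<And>i. d (i+1) * d i = 0\<^sub>m (n (i+2)) (n i)"
    using cx unfolding is_complex_def by blast+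
  have dc': "d (i-1) \<in> carrier_mat (n i) (n (i-1))" for i using dc[of "i-1"] by simp
  have hc': "h (i+1) \<in> carrier_mat (n i) (n (i+1))" for i using hc[of "i+1"] by simp
  have dd': "d i * d (i-1) = 0\<^sub>m (n (i+1)) (n (i-1))" for i
    using dd[of "i-1"] by (simp add: add.commute)
  have \<tau>c: "\<tau> i \<in> carrier_mat (n i) (n i)" for i
    unfolding \<tau> using dc'[of i] hc[of i] dc[of i] hc'[of i] by auto
  have "d i * \<tau> i = d i * h (i+1) * d i" for i
  proof -
    have "d i * \<tau> i = d i * (d (i-1) * h i) + d i * (h (i+1) * d i)"
      unfolding \<tau> using dc'[of i] hc[of i] dc[of i] hc'[of i] by (intro mult_add_distrib_mat) auto
    also have "d i * (d (i-1) * h i) = (d i * d (i-1)) * h i"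
      using dc'[of i] hc[of i] dc[of i] by simp
    finally show ?thesis using dd' hc[of i] dc[of i] hc'[of i] by simp
  qed
  moreover have "\<tau> (i+1) * d i = d i * h (i+1) * d i" for i
  proof -
    have dc2: "d (i+1) \<in> carrier_mat (n (i+2)) (n (i+1))" using dc[of "i+1"] by (simp add: add.assoc)
    have hc2: "h (i+2) \<in> carrier_mat (n (i+1)) (n (i+2))" using hc[of "i+2"] by (simp add: add.commute)
    have \<tau>1: "\<tau> (i+1) = d i * h (i+1) + h (i+2) * d (i+1)" by (simp add: \<tau> add.assoc)
    have "\<tau> (i+1) * d i = d i * h (i+1) * d i + h (i+2) * d (i+1) * d i"
      unfolding \<tau>1 by (rule add_mult_distrib_mat) (use dc[of i] hc'[of i] dc2 hc2 in auto)
    also have "h (i+2) * d (i+1) * d i = h (i+2) * (d (i+1) * d i)"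
      using dc[of i] dc2 hc2 by simp
    finally show ?thesis using dd hc2 dc[of i] hc'[of i] by simp
  qed
  ultimately show ?thesis unfolding chain_map_def using \<tau>c by simp
qed

definition int_partial_sum :: "(int \<Rightarrow> 'a::ab_group_add) \<Rightarrow> int \<Rightarrow> 'a" where
  "int_partial_sum U i = sum U {0<..i} - sum U {i<..0}"

lemma int_partial_sum_step: "int_partial_sum U i = int_partial_sum U (i-1) + U i"
proof (cases "0 < i")
  case True
  then have "{0<..i} = insert i {0<..i-1}" "{i<..0} = {}" "{i-1<..0} = {}" by auto
  then show ?thesis by (simp add: int_partial_sum_def)
next
  case False
  then have "{i-1<..0} = insert i {i<..0}" "{0<..i} = {}" "{0<..i-1} = {}" by auto
  then show ?thesis by (simp add: int_partial_sum_def)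
qed

lemma sum_int_interval_eq_partial_sum_diff:
  "z \<le> z' \<Longrightarrow> sum U {z+1..z'} = int_partial_sum U z' - int_partial_sum U z"
proof (induction z' rule: int_ge_induct)
  case (step w)
  have "{z+1..w+1} = insert (w+1) {z+1..w}" using step.hyps by auto
  then show ?case using step int_partial_sum_step[of U "w+1"] by simp
qed simp

lemma eq_on_if_eq_on_consecutive:
  fixes f :: "int \<Rightarrow> 'a"
  assumes consecutive: "\<And>z z'. z \<in> Z \<Longrightarrow> z' \<in> Z \<Longrightarrow> z < z' \<Longrightarrow> {z<..<z'} \<inter> Z = {} \<Longrightarrow> f z = f z'"
    and "z \<in> Z" "z' \<in> Z"
  shows "f z = f z'"
proof -
  have "f z = f z'" if "z \<in> Z" "z' \<in> Z" "z \<le> z'" for z z'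
    using that
  proof (induction "nat (z' - z)" arbitrary: z z' rule: less_induct)
    case less
    show ?case
    proof (cases "{z<..<z'} \<inter> Z = {}")
      case True
      then show ?thesis using consecutive less.prems by (cases "z = z'") auto
    next
      case False
      then obtain w where w: "w \<in> Z" "z < w" "w < z'" by auto
      have "f z = f w" by (rule less.hyps) (use w less.prems in auto)
      also have "\<dots> = f z'" by (rule less.hyps) (use w less.prems in auto)
      finally show ?thesis .
    qed
  qed
  then show ?thesis using assms(2,3) by (metis linear)
qed

abbreviation is_zero_mat :: "'a::zero mat \<Rightarrow> bool" where
  "is_zero_mat A \<equiv> A = 0\<^sub>m (dim_row A) (dim_col A)"

lemma is_stretch_between_consecutive_zeros:
  assumes "is_zero_mat (d z)" "is_zero_mat (d z')" "z < z'"
    and "\<And>w. z < w \<Longrightarrow> w < z' \<Longrightarrow> \<not> is_zero_mat (d w)"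
  shows "is_stretch d {z+1..z'}"
  unfolding is_stretch_def
proof (intro conjI allI impI)
  show "finite_interval {z+1..z'}" unfolding finite_interval_def by blast
  show "stretch_prop d {z+1..z'}" unfolding stretch_prop_def using assms(4) by auto
  fix S' assume S': "finite_interval S' \<and> stretch_prop d S' \<and> {z+1..z'} \<subseteq> S'"
  then obtain M N where MN: "S' = {M..N}" unfolding finite_interval_def by blast
  have "\<not> (z \<in> S' \<and> z+1 \<in> S')" "\<not> (z' \<in> S' \<and> z'+1 \<in> S')"
    using S' assms(1,2) unfolding stretch_prop_def by blast+
  then have "M = z+1" "N = z'" using S' MN assms(3) by auto
  then show "S' = {z+1..z'}" using MN by simp
qed

lemma minus_one_power_nat_abs_pred: "(-1::'a::ring_1) ^ nat \<bar>i-1\<bar> = - ((-1) ^ nat \<bar>i\<bar>)"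
proof -
  have "(-1::'a) ^ nat \<bar>j\<bar> = (if even j then 1 else -1)" for j
    by (simp add: even_nat_iff minus_one_power_iff)
  then show ?thesis by simp
qed

lemma exists_split_vanishing_at_zeros:
  fixes d :: "int \<Rightarrow> 'k::field mat" and T :: "int \<Rightarrow> 'k"
  assumes "\<And>S. is_stretch d S \<Longrightarrow> (\<Sum>i\<in>S. (-1) ^ nat \<bar>i\<bar> * T i) = 0"
  shows "\<exists>a. (\<forall>i. a (i-1) + a i = T i) \<and> (\<forall>i. is_zero_mat (d i) \<longrightarrow> a i = 0)"
proof -
  define Z where "Z = {i. is_zero_mat (d i)}"
  define P where "P = int_partial_sum (\<lambda>i. (-1) ^ nat \<bar>i\<bar> * T i)"
  have "P z = P z'" if "z \<in> Z" "z' \<in> Z" for z z'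
  proof (rule eq_on_if_eq_on_consecutive[OF _ that])
    fix z z' assume "z \<in> Z" "z' \<in> Z" "z < z'" "{z<..<z'} \<inter> Z = {}"
    then have "is_stretch d {z+1..z'}"
      by (intro is_stretch_between_consecutive_zeros) (auto simp: Z_def)
    then have "(\<Sum>i\<in>{z+1..z'}. (-1) ^ nat \<bar>i\<bar> * T i) = 0" by (rule assms)
    moreover have "(\<Sum>i\<in>{z+1..z'}. (-1) ^ nat \<bar>i\<bar> * T i) = P z' - P z"
      unfolding P_def using \<open>z < z'\<close> by (simp add: sum_int_interval_eq_partial_sum_diff)
    ultimately show "P z = P z'" by simp
  qed
  then obtain C where C: "\<And>z. z \<in> Z \<Longrightarrow> P z = C" by (cases "Z = {}") blast+
  define a where "a i = (-1) ^ nat \<bar>i\<bar> * (P i - C)" for i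
  have "a (i-1) + a i = (-1) ^ nat \<bar>i\<bar> * (P i - P (i-1))" for i
    by (simp add: a_def minus_one_power_nat_abs_pred algebra_simps)
  also have "(-1) ^ nat \<bar>i\<bar> * (P i - P (i-1)) = T i" for i
    by (simp add: P_def int_partial_sum_step[of _ i] power_mult_distrib[symmetric] flip: power_add mult.assoc)
  finally have "a (i-1) + a i = T i" for i .
  moreover have "a i = 0" if "is_zero_mat (d i)" for i using C that by (simp add: a_def Z_def)
  ultimately show ?thesis by blast
qed

lemma exists_maps_with_traces:
  fixes d :: "int \<Rightarrow> 'k::field mat"
  assumes dc: "\<And>i. d i \<in> carrier_mat (n (i+1)) (n i)"
    and a0: "\<And>i. is_zero_mat (d i) \<Longrightarrow> a i = 0"
  shows "\<exists>g. \<forall>i. g i \<in> carrier_mat (n i) (n (i+1)) \<and> mat_trace (g i * d i) = a i"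
proof -
  have "\<exists>B \<in> carrier_mat (n i) (n (i+1)). mat_trace (B * d i) = a i" for i
  proof (cases "is_zero_mat (d i)")
    case True
    then show ?thesis using a0 dc[of i]
      by (intro bexI[of _ "0\<^sub>m (n i) (n (i+1))"]) (auto simp: mat_trace_def scalar_prod_def)
  next
    case False
    then show ?thesis using dc[of i] by (intro exists_mat_trace_mult_eq) auto
  qed
  then show ?thesis by metis
qed

theorem lemmaB:
  fixes n :: "int \<Rightarrow> nat" and d :: "int \<Rightarrow> 'k::field mat" and T :: "int \<Rightarrow> 'k"
  assumes "is_complex n d"
    and "\<And>S. is_stretch d S \<Longrightarrow> (\<Sum>i\<in>S. (-1) ^ nat \<bar>i\<bar> * T i) = 0"
  shows "\<exists>\<tau>. chain_map n d \<tau> \<and> null_homotopic n d \<tau> \<and> (\<forall>i. mat_trace (\<tau> i) = T i)"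
proof -
  have dc: "\<And>i. d i \<in> carrier_mat (n (i+1)) (n i)"
    using assms(1) unfolding is_complex_def by blast
  obtain a where aT: "\<And>i. a (i-1) + a i = T i" and a0: "\<And>i. is_zero_mat (d i) \<Longrightarrow> a i = 0"
    using exists_split_vanishing_at_zeros[OF assms(2)] by blast
  obtain g where gc: "\<And>i. g i \<in> carrier_mat (n i) (n (i+1))"
    and gt: "\<And>i. mat_trace (g i * d i) = a i"
    using exists_maps_with_traces[of d n a] dc a0 by blast
  define \<tau> where "\<tau> i = d (i-1) * g (i-1) + g i * d i" for i
  have nh: "null_homotopic n d \<tau>"
    unfolding null_homotopic_def \<tau>_def using gc[of "_ - 1"] by (intro exI[of _ "\<lambda>i. g (i-1)"]) auto
  have "mat_trace (\<tau> i) = T i" for i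
  proof -
    have dc': "d (i-1) \<in> carrier_mat (n i) (n (i-1))" and gc': "g (i-1) \<in> carrier_mat (n (i-1)) (n i)"
      using dc[of "i-1"] gc[of "i-1"] by simp_all
    have "mat_trace (\<tau> i) = mat_trace (d (i-1) * g (i-1)) + mat_trace (g i * d i)"
      unfolding \<tau>_def using dc' gc' dc[of i] gc[of i] by (intro mat_trace_add) auto
    also have "mat_trace (d (i-1) * g (i-1)) = mat_trace (g (i-1) * d (i-1))"
      using dc' gc' by (rule mat_trace_mult_comm)
    finally show ?thesis by (simp add: gt aT)
  qed
  then show ?thesis using nh null_homotopic_imp_chain_map[OF assms(1) nh] by blast
qed

end
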